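(* Let the number of agents be even, $n=2p$. Then the Bloc formation mechanism Nash implements the majority correspondence $Maj$ in the following sense: for every preference profile $R$ with $|Maj(R)|=1$, every Nash equilibrium outcome is $Maj(R)$; and for every $R$ with $Maj(R)=\{a,b\}$, the unique Nash equilibrium outcome is the lottery assigning probability $1/2$ to each of $a$ and $b$.
   Context: Agents $I=\{1,\dots,n\}$, $n=2p$, options $A=\{a,b\}$, each agent with a strict preference over $A$; preferences over lotteries follow stochastic dominance: an agent preferring $x$ weakly (strictly) prefers $\beta$ to $\eta$ iff $\beta(x)\ge\eta(x)$ ($>$). Majority correspondence: $Maj(R)=a$ if $|\{i:aR_ib\}|\ge p+1$, $Maj(R)=b$ if $|\{i:bR_ia\}|\ge p+1$, and $Maj(R)=\{a,b\}$ otherwise. Bloc formation mechanism: each agent sends $m_i=(v_i,c_i)$ with $v_i\in A$ and $c_i$ a set of exactly $p$ agents other than $i$. For $x\in A$, a set $B$ with $|B|\ge p+1$ is a bloc in favor of $x$ in $m$ if $v_i=x$ and $c_i\subseteq B$ for every $i\in B$. If $m$ admits a bloc in favor of $x$ the outcome is $x$; otherwise the outcome is the lottery $\eta(m)$ with $\eta^x(m)=\sum_{i}\eta_i(m)\mathbf 1\{v_i=x\}$, $\eta_i(m)=|\{j\ne i: i\in c_j\}|/(np)$. *)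

theory Defs
  imports Complex_Main
begin

datatype alt = Alt_a | Alt_b

text \<open>Agents are 1..n.  A preference of agent i is a relation R i x y meaning x R_i y.
  It is strict: reflexive, complete, antisymmetric (over two options, transitive).\<close>
definition strict_pref :: "(alt \<Rightarrow> alt \<Rightarrow> bool) \<Rightarrow> bool" where
  "strict_pref P \<longleftrightarrow> (\<forall>x. P x x) \<and> (\<forall>x y. x \<noteq> y \<longrightarrow> (P x y \<longleftrightarrow> \<not> P y x))"

text \<open>Lotteries over A are functions alt => real.  Degenerate lottery on x.\<close>
definition deg :: "alt \<Rightarrow> alt \<Rightarrow> real" where
  "deg x = (\<lambda>y. if y = x then 1 else 0)"

definition sd_strict :: "(nat \<Rightarrow> alt \<Rightarrow> alt \<Rightarrow> bool) \<Rightarrow> nat \<Rightarrow> (alt \<Rightarrow> real) \<Rightarrow> (alt \<Rightarrow> real) \<Rightarrow> bool" where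
  "sd_strict R i \<beta> \<eta> \<longleftrightarrow> (\<exists>x. (\<forall>y. R i x y) \<and> \<beta> x > \<eta> x)"

definition maj :: "nat \<Rightarrow> nat \<Rightarrow> (nat \<Rightarrow> alt \<Rightarrow> alt \<Rightarrow> bool) \<Rightarrow> alt set" where
  "maj n p R =
     (if card {i \<in> {1..n}. R i Alt_a Alt_b} \<ge> p + 1 then {Alt_a}
      else if card {i \<in> {1..n}. R i Alt_b Alt_a} \<ge> p + 1 then {Alt_b}
      else {Alt_a, Alt_b})"

type_synonym msg = "alt \<times> nat set"

definition valid_msg :: "nat \<Rightarrow> nat \<Rightarrow> nat \<Rightarrow> msg \<Rightarrow> bool" where
  "valid_msg n p i d \<longleftrightarrow> snd d \<subseteq> {1..n} - {i} \<and> card (snd d) = p"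

definition is_bloc :: "nat \<Rightarrow> nat \<Rightarrow> (nat \<Rightarrow> msg) \<Rightarrow> alt \<Rightarrow> nat set \<Rightarrow> bool" where
  "is_bloc n p m x B \<longleftrightarrow> B \<subseteq> {1..n} \<and> card B \<ge> p + 1 \<and>
      (\<forall>i\<in>B. fst (m i) = x \<and> snd (m i) \<subseteq> B)"

definition eta_agent :: "nat \<Rightarrow> nat \<Rightarrow> (nat \<Rightarrow> msg) \<Rightarrow> nat \<Rightarrow> real" where
  "eta_agent n p m i = real (card {j \<in> {1..n}. j \<noteq> i \<and> i \<in> snd (m j)}) / (real n * real p)"

definition eta_lot :: "nat \<Rightarrow> nat \<Rightarrow> (nat \<Rightarrow> msg) \<Rightarrow> alt \<Rightarrow> real" where
  "eta_lot n p m x = (\<Sum>i\<in>{1..n}. if fst (m i) = x then eta_agent n p m i else 0)"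

text \<open>Outcome of the bloc formation mechanism (at most one option can have a bloc,
  since blocs for different options are disjoint and each has more than p agents).\<close>
definition outcome :: "nat \<Rightarrow> nat \<Rightarrow> (nat \<Rightarrow> msg) \<Rightarrow> alt \<Rightarrow> real" where
  "outcome n p m =
     (if \<exists>B. is_bloc n p m Alt_a B then deg Alt_a
      else if \<exists>B. is_bloc n p m Alt_b B then deg Alt_b
      else eta_lot n p m)"

definition nash_eq :: "nat \<Rightarrow> nat \<Rightarrow> (nat \<Rightarrow> alt \<Rightarrow> alt \<Rightarrow> bool) \<Rightarrow> (nat \<Rightarrow> msg) \<Rightarrow> bool" where
  "nash_eq n p R m \<longleftrightarrow> (\<forall>i\<in>{1..n}. valid_msg n p i (m i)) \<and>
     (\<forall>i\<in>{1..n}. \<forall>d. valid_msg n p i d \<longrightarrow> \<not> sd_strict R i (outcome n p (m(i := d))) (outcome n p m))"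

definition NE_outcomes :: "nat \<Rightarrow> nat \<Rightarrow> (nat \<Rightarrow> alt \<Rightarrow> alt \<Rightarrow> bool) \<Rightarrow> (alt \<Rightarrow> real) set" where
  "NE_outcomes n p R = {outcome n p m | m. nash_eq n p R m}"

end

theory Submission
  imports Defs
begin

text \<open>
  In a Nash equilibrium there is no bloc for an option \<open>x\<close> as soon as the other option \<open>y\<close> has
  at least \<open>p\<close> supporters. A least bloc for \<open>x\<close> has more than \<open>p\<close> members, so it contains a
  supporter \<open>i\<close> of \<open>y\<close>; by minimality somebody nominates \<open>i\<close>, hence if \<open>i\<close> switches its vote to
  \<open>y\<close>, every bloc for \<open>x\<close> disappears and \<open>y\<close> gets positive probability instead of probability \<open>0\<close>.

  In an equilibrium without blocs no supporter of \<open>x\<close> can raise \<open>\<eta>(x)\<close>. So every nominated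
  agent votes for its favorite, and every sincere voter nominates either only voters of its
  option or all of them. Counting nominations then shows that the voters for each option are
  exactly its supporters, \<open>p\<close> of them, each nominating all its co-voters; this is a tie and gives
  the lottery \<open>(1/2, 1/2)\<close>. Hence a strict majority for \<open>x\<close> forces a bloc for \<open>x\<close>. Explicit
  profiles show that these outcomes are attained.
\<close>

section \<open>Nominations and the lottery\<close>

fun other :: "alt \<Rightarrow> alt" where
  "other Alt_a = Alt_b"
| "other Alt_b = Alt_a"

lemma other_neq [simp]: "other x \<noteq> x" "x \<noteq> other x"
  by (cases x; simp)+

lemma other_other [simp]: "other (other x) = x"
  by (cases x) simp_all

lemma neq_iff_other: "y \<noteq> x \<longleftrightarrow> y = other x"
  by (cases x; cases y) simp_all

lemma alt_cases_other: "P x \<Longrightarrow> P (other x) \<Longrightarrow> P z"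
  by (cases x; cases z) simp_all

definition valid_profile :: "nat \<Rightarrow> nat \<Rightarrow> (nat \<Rightarrow> msg) \<Rightarrow> bool" where
  "valid_profile n p m \<longleftrightarrow> (\<forall>i\<in>{1..n}. valid_msg n p i (m i))"

definition voters :: "nat \<Rightarrow> (nat \<Rightarrow> msg) \<Rightarrow> alt \<Rightarrow> nat set" where
  "voters n m x = {k\<in>{1..n}. fst (m k) = x}"

definition nominations :: "nat \<Rightarrow> (nat \<Rightarrow> msg) \<Rightarrow> alt \<Rightarrow> nat" where
  "nominations n m x = (\<Sum>j\<in>{1..n}. card (snd (m j) \<inter> voters n m x))"

lemma valid_profileD:
  "valid_profile n p m \<Longrightarrow> j \<in> {1..n} \<Longrightarrow> snd (m j) \<subseteq> {1..n} - {j} \<and> card (snd (m j)) = p"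
  unfolding valid_profile_def valid_msg_def by blast

lemma valid_profile_fun_upd:
  "valid_profile n p m \<Longrightarrow> valid_msg n p i d \<Longrightarrow> valid_profile n p (m(i := d))"
  unfolding valid_profile_def by simp

lemma ex_valid_nominees_within:
  assumes "A \<subseteq> {1..n}" "p \<le> card (A - {j})"
  shows "\<exists>c. valid_msg n p j (v, c) \<and> c \<subseteq> A"
proof -
  obtain c where "c \<subseteq> A - {j}" "card c = p"
    using assms(2) by (rule obtain_subset_with_card_n)
  with assms(1) show ?thesis
    unfolding valid_msg_def by auto
qed

lemma finite_voters [simp]: "finite (voters n m x)"
  unfolding voters_def by simp

lemma voters_fun_upd_subset: "i \<in> voters n m x \<Longrightarrow> voters n (m(i := d)) x \<subseteq> voters n m x"
  unfolding voters_def by auto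

lemma card_fibers_other:
  assumes "finite A"
  shows "card {i\<in>A. f i = x} + card {i\<in>A. f i = other x} = card A"
proof -
  have "A = {i\<in>A. f i = x} \<union> {i\<in>A. f i = other x}"
    using neq_iff_other by auto
  moreover have "card ({i\<in>A. f i = x} \<union> {i\<in>A. f i = other x})
      = card {i\<in>A. f i = x} + card {i\<in>A. f i = other x}"
    using assms by (intro card_Un_disjoint) auto
  ultimately show ?thesis
    by simp
qed

lemma voters_Un_other: "voters n m x \<union> voters n m (other x) = {1..n}"
  unfolding voters_def using neq_iff_other by auto

lemma voters_Int_other: "voters n m x \<inter> voters n m (other x) = {}"
  unfolding voters_def by auto

lemma card_voters_add_other: "card (voters n m x) + card (voters n m (other x)) = n"
  unfolding voters_def using card_fibers_other [of "{1..n}" "\<lambda>k. fst (m k)"] by simp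

lemma Int_nonempty_if_card_sum_gt:
  assumes "finite U" "A \<subseteq> U" "B \<subseteq> U" "card U < card A + card B"
  shows "A \<inter> B \<noteq> {}"
proof
  assume "A \<inter> B = {}"
  with assms have "card (A \<union> B) = card A + card B"
    by (intro card_Un_disjoint) (auto intro: finite_subset)
  moreover have "card (A \<union> B) \<le> card U"
    using assms by (intro card_mono) auto
  ultimately show False
    using assms(4) by simp
qed

lemma sum_card_nominators:
  fixes n :: nat
  assumes "\<forall>j\<in>{1..n}. snd (m j) \<subseteq> {1..n} - {j}" "V \<subseteq> {1..n}"
  shows "(\<Sum>k\<in>V. card {j\<in>{1..n}. j \<noteq> k \<and> k \<in> snd (m j)}) = (\<Sum>j\<in>{1..n}. card (snd (m j) \<inter> V))"
proof -
  have "finite V"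
    using assms(2) by (rule finite_subset) simp
  have "(\<Sum>k\<in>V. card {j\<in>{1..n}. j \<noteq> k \<and> k \<in> snd (m j)})
      = (\<Sum>k\<in>V. \<Sum>j\<in>{1..n}. if k \<in> snd (m j) then 1 else 0)"
  proof (rule sum.cong [OF refl])
    fix k
    have "{j\<in>{1..n}. j \<noteq> k \<and> k \<in> snd (m j)} = {j\<in>{1..n}. k \<in> snd (m j)}"
      using assms(1) by auto
    then show "card {j\<in>{1..n}. j \<noteq> k \<and> k \<in> snd (m j)} = (\<Sum>j\<in>{1..n}. if k \<in> snd (m j) then 1 else 0)"
      by (simp add: sum.inter_filter [symmetric])
  qed
  also have "\<dots> = (\<Sum>j\<in>{1..n}. \<Sum>k\<in>V. if k \<in> snd (m j) then 1 else 0)"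
    by (rule sum.swap)
  also have "\<dots> = (\<Sum>j\<in>{1..n}. card (snd (m j) \<inter> V))"
    using \<open>finite V\<close> by (simp add: sum.inter_filter [symmetric] Int_def conj_commute)
  finally show ?thesis .
qed

lemma eta_lot_eq_nominations:
  assumes "valid_profile n p m"
  shows "eta_lot n p m x = real (nominations n m x) / (real n * real p)"
proof -
  have "eta_lot n p m x = (\<Sum>k\<in>voters n m x. eta_agent n p m k)"
    unfolding eta_lot_def voters_def by (rule sum.inter_filter [symmetric]) simp
  also have "\<dots> = (\<Sum>k\<in>voters n m x. real (card {j\<in>{1..n}. j \<noteq> k \<and> k \<in> snd (m j)})) / (real n * real p)"
    unfolding eta_agent_def by (simp add: sum_divide_distrib)
  also have "(\<Sum>k\<in>voters n m x. real (card {j\<in>{1..n}. j \<noteq> k \<and> k \<in> snd (m j)})) = real (nominations n m x)"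
    unfolding nominations_def of_nat_sum [symmetric] using valid_profileD [OF assms]
    by (subst sum_card_nominators) (auto simp: voters_def)
  finally show ?thesis .
qed

lemma card_nominees_split:
  assumes "valid_profile n p m" "j \<in> {1..n}"
  shows "card (snd (m j) \<inter> voters n m x) + card (snd (m j) \<inter> voters n m (other x)) = p"
proof -
  have "snd (m j) \<subseteq> {1..n}" "card (snd (m j)) = p"
    using valid_profileD [OF assms] by auto
  then have "finite (snd (m j))" and "snd (m j) - voters n m x = snd (m j) \<inter> voters n m (other x)"
    using voters_Un_other [of n m x] voters_Int_other [of n m x] by (auto intro: finite_subset)
  with \<open>card (snd (m j)) = p\<close> show ?thesis
    by (metis card_Int_Diff)
qed

lemma nominations_add_other:
  assumes "valid_profile n p m"
  shows "nominations n m x + nominations n m (other x) = n * p"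
  using card_nominees_split [OF assms] by (simp add: nominations_def sum.distrib [symmetric])

lemma eta_lot_nonneg: "eta_lot n p m x \<ge> 0"
  unfolding eta_lot_def eta_agent_def by (intro sum_nonneg) simp

lemma eta_lot_add_other:
  assumes "valid_profile n p m" "n > 0" "p > 0"
  shows "eta_lot n p m x + eta_lot n p m (other x) = 1"
proof -
  have "real (nominations n m x) + real (nominations n m (other x)) = real n * real p"
    using nominations_add_other [OF assms(1), of x] by (metis of_nat_add of_nat_mult)
  then show ?thesis
    using assms by (simp add: eta_lot_eq_nominations add_divide_distrib [symmetric])
qed

lemma eta_lot_le_1:
  assumes "valid_profile n p m" "n > 0" "p > 0"
  shows "eta_lot n p m x \<le> 1"
  using eta_lot_add_other [OF assms, of x] eta_lot_nonneg [of n p m "other x"] by linarith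

lemma eta_agent_pos:
  assumes "n > 0" "p > 0" "j \<in> {1..n}" "j \<noteq> i" "i \<in> snd (m j)"
  shows "eta_agent n p m i > 0"
proof -
  have "card {j\<in>{1..n}. j \<noteq> i \<and> i \<in> snd (m j)} > 0"
    using assms(3-5) by (auto simp: card_gt_0_iff)
  then show ?thesis
    using assms(1,2) by (simp add: eta_agent_def)
qed

lemma eta_agent_fun_upd:
  "snd d = snd (m i) \<Longrightarrow> eta_agent n p (m(i := d)) = eta_agent n p m"
  unfolding eta_agent_def by (intro ext arg_cong [where f = "\<lambda>S. real (card S) / (real n * real p)"]) auto

lemma eta_lot_switch_vote:
  assumes "i \<in> {1..n}" "fst (m i) \<noteq> x" "d = (x, snd (m i))"
  shows "eta_lot n p (m(i := d)) x = eta_lot n p m x + eta_agent n p m i"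
proof -
  let ?f = "\<lambda>m' k. if fst (m' k) = x then eta_agent n p m k else 0"
  have agent_eq: "eta_agent n p (m(i := d)) = eta_agent n p m"
    using assms(3) by (simp add: eta_agent_fun_upd)
  have "eta_lot n p (m(i := d)) x = ?f (m(i := d)) i + (\<Sum>k\<in>{1..n} - {i}. ?f (m(i := d)) k)"
    unfolding eta_lot_def agent_eq using assms(1) by (rule sum.remove [OF finite_atLeastAtMost])
  also have "\<dots> = eta_agent n p m i + (\<Sum>k\<in>{1..n} - {i}. ?f m k)"
    using assms(3) by (intro arg_cong2 [of _ _ _ _ "(+)"] sum.cong) auto
  also have "\<dots> = eta_agent n p m i + eta_lot n p m x"
    unfolding eta_lot_def using assms(1,2) by (simp add: sum.remove)
  finally show ?thesis
    by linarith
qed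

lemma nominations_fun_upd_nominees:
  assumes "i \<in> {1..n}" "fst d = fst (m i)"
  shows "nominations n (m(i := d)) x + card (snd (m i) \<inter> voters n m x)
       = nominations n m x + card (snd d \<inter> voters n m x)"
proof -
  let ?g = "\<lambda>m' j. card (snd (m' j) \<inter> voters n m x)"
  have "voters n (m(i := d)) x = voters n m x"
    unfolding voters_def using assms(2) by auto
  then have "nominations n (m(i := d)) x = ?g (m(i := d)) i + (\<Sum>j\<in>{1..n} - {i}. ?g (m(i := d)) j)"
    unfolding nominations_def using assms(1) by (simp add: sum.remove)
  moreover have "nominations n m x = ?g m i + (\<Sum>j\<in>{1..n} - {i}. ?g m j)"
    unfolding nominations_def using assms(1) by (simp add: sum.remove)
  moreover have "(\<Sum>j\<in>{1..n} - {i}. ?g (m(i := d)) j) = (\<Sum>j\<in>{1..n} - {i}. ?g m j)"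
    by (rule sum.cong) auto
  ultimately show ?thesis
    by simp
qed

lemma nominations_fun_upd_le:
  assumes "valid_profile n p m" "i \<in> voters n m x" "voters n m x - {i} \<subseteq> snd (m i)"
    and "valid_msg n p i d"
  shows "nominations n (m(i := d)) x \<le> nominations n m x"
  unfolding nominations_def
proof (rule sum_mono)
  fix j
  assume "j \<in> {1..n}"
  have fewer_voters: "voters n (m(i := d)) x \<subseteq> voters n m x"
    using assms(2) by (rule voters_fun_upd_subset)
  show "card (snd ((m(i := d)) j) \<inter> voters n (m(i := d)) x) \<le> card (snd (m j) \<inter> voters n m x)"
  proof (cases "j = i")
    case True
    have "snd d \<inter> voters n (m(i := d)) x \<subseteq> snd (m i) \<inter> voters n m x"
      using fewer_voters assms(3,4) unfolding valid_msg_def by auto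
    with True show ?thesis
      by (simp add: card_mono)
  next
    case False
    have "snd (m j) \<inter> voters n (m(i := d)) x \<subseteq> snd (m j) \<inter> voters n m x"
      using fewer_voters by blast
    with False show ?thesis
      by (simp add: card_mono)
  qed
qed

lemma eta_lot_half:
  assumes valid: "valid_profile n p m" and "n = 2 * p" "p \<ge> 1"
    and card_voters: "\<And>z. card (voters n m z) = p"
    and covoters: "\<And>z i. i \<in> voters n m z \<Longrightarrow> voters n m z - {i} \<subseteq> snd (m i)"
  shows "eta_lot n p m x = 1 / 2"
proof -
  have nominated_covoters: "snd (m j) \<inter> voters n m z = voters n m z - {j}" if "j \<in> voters n m z" for j z
    using covoters [OF that] valid_profileD [OF valid, of j] that unfolding voters_def by auto
  have own: "card (snd (m j) \<inter> voters n m z) = p - 1" if "j \<in> voters n m z" for j z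
    using that card_voters [of z] by (simp add: nominated_covoters)
  have opposing: "card (snd (m j) \<inter> voters n m x) = 1" if "j \<in> voters n m (other x)" for j
  proof -
    have "j \<in> {1..n}"
      using that unfolding voters_def by simp
    with card_nominees_split [OF valid this, of "other x"] own [OF that] \<open>p \<ge> 1\<close> show ?thesis
      by simp
  qed
  have "nominations n m x = (\<Sum>j\<in>voters n m x. card (snd (m j) \<inter> voters n m x))
      + (\<Sum>j\<in>voters n m (other x). card (snd (m j) \<inter> voters n m x))"
    unfolding nominations_def voters_Un_other [of n m x, symmetric]
    by (rule sum.union_disjoint) (simp_all add: voters_Int_other)
  also have "\<dots> = p * (p - 1) + p"
    using own opposing card_voters by simp
  also have "\<dots> = p * p"
    using \<open>p \<ge> 1\<close> by (simp add: algebra_simps)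
  finally show ?thesis
    using eta_lot_eq_nominations [OF valid] assms(2,3) by simp
qed

section \<open>Blocs\<close>

lemma is_blocI:
  assumes "valid_profile n p m" "B \<subseteq> {1..n}" "i \<in> B"
    and "\<forall>j\<in>B. fst (m j) = x \<and> snd (m j) \<subseteq> B"
  shows "is_bloc n p m x B"
proof -
  have "finite B"
    using assms(2) by (rule finite_subset) simp
  have "i \<in> {1..n}"
    using assms(2,3) by blast
  then have "snd (m i) \<subseteq> B - {i}" "card (snd (m i)) = p"
    using valid_profileD [OF assms(1)] assms(3,4) by auto
  then have "p \<le> card (B - {i})"
    using \<open>finite B\<close> by (metis card_mono finite_Diff)
  moreover have "card B > 0"
    using \<open>finite B\<close> assms(3) by (auto simp: card_gt_0_iff)
  ultimately have "p + 1 \<le> card B"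
    using \<open>finite B\<close> assms(3) by (simp add: card_Diff_singleton)
  then show ?thesis
    using assms(2,4) unfolding is_bloc_def by blast
qed

lemma is_bloc_subset_voters: "is_bloc n p m x B \<Longrightarrow> B \<subseteq> voters n m x"
  unfolding is_bloc_def voters_def by auto

lemma not_is_bloc_if_card_voters_le:
  assumes "card (voters n m x) \<le> p"
  shows "\<not> is_bloc n p m x B"
proof
  assume "is_bloc n p m x B"
  then have "p + 1 \<le> card B" "card B \<le> card (voters n m x)"
    using is_bloc_subset_voters [of n p m x B] by (simp_all add: is_bloc_def card_mono)
  with assms show False
    by simp
qed

lemma is_bloc_fun_upd: "i \<notin> B \<Longrightarrow> is_bloc n p (m(i := d)) x B \<longleftrightarrow> is_bloc n p m x B"
  unfolding is_bloc_def by auto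

lemma blocs_Int_nonempty:
  assumes "n = 2 * p" "is_bloc n p m x A" "is_bloc n p m y B"
  shows "A \<inter> B \<noteq> {}"
  using assms by (intro Int_nonempty_if_card_sum_gt [of "{1..n}"]) (auto simp: is_bloc_def)

lemma blocs_same_option:
  assumes "n = 2 * p" "is_bloc n p m x A" "is_bloc n p m y B"
  shows "x = y"
  using blocs_Int_nonempty [OF assms] assms(2,3) unfolding is_bloc_def by auto

lemma is_bloc_Int:
  assumes "valid_profile n p m" "n = 2 * p" "is_bloc n p m x A" "is_bloc n p m x B"
  shows "is_bloc n p m x (A \<inter> B)"
proof -
  obtain j where "j \<in> A \<inter> B"
    using blocs_Int_nonempty [OF assms(2-4)] by blast
  then show ?thesis
    using assms(3,4) by (intro is_blocI [OF assms(1)]) (auto simp: is_bloc_def)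
qed

lemma ex_least_bloc:
  assumes "valid_profile n p m" "n = 2 * p" "is_bloc n p m x B"
  obtains K where "is_bloc n p m x K" "\<And>A. is_bloc n p m x A \<Longrightarrow> K \<subseteq> A"
proof -
  obtain K where K: "is_bloc n p m x K" and min: "\<And>A. is_bloc n p m x A \<Longrightarrow> card K \<le> card A"
    using ex_has_least_nat [of "is_bloc n p m x" B card] assms(3) by blast
  have "K \<subseteq> A" if "is_bloc n p m x A" for A
  proof -
    have "finite K"
      using K unfolding is_bloc_def by (meson finite_atLeastAtMost finite_subset)
    moreover have "card K \<le> card (K \<inter> A)"
      using min is_bloc_Int [OF assms(1,2) K that] by blast
    ultimately have "K \<inter> A = K"
      by (intro card_seteq) auto
    then show ?thesis
      by blast
  qed
  with K that show ?thesis
    by blast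
qed

text \<open>Otherwise the least bloc minus \<open>i\<close> would still be closed, hence a smaller bloc.\<close>
lemma least_bloc_member_nominated:
  assumes "valid_profile n p m" "p \<ge> 1" "is_bloc n p m x K"
    and least: "\<And>A. is_bloc n p m x A \<Longrightarrow> K \<subseteq> A" and "i \<in> K"
  shows "\<exists>j\<in>{1..n}. j \<noteq> i \<and> i \<in> snd (m j)"
proof (rule ccontr)
  assume unnominated: "\<not> ?thesis"
  have "finite K" "2 \<le> card K"
    using assms(2,3) unfolding is_bloc_def by (auto intro: finite_subset)
  then have "card (K - {i}) > 0"
    using \<open>i \<in> K\<close> by (simp add: card_Diff_singleton)
  then obtain j where "j \<in> K - {i}"
    by (auto simp: card_gt_0_iff)
  moreover have "\<forall>k\<in>K - {i}. fst (m k) = x \<and> snd (m k) \<subseteq> K - {i}"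
    using assms(3) unnominated unfolding is_bloc_def by blast
  ultimately have "is_bloc n p m x (K - {i})"
    using assms(3) by (intro is_blocI [OF assms(1)]) (auto simp: is_bloc_def)
  then show False
    using least \<open>i \<in> K\<close> by blast
qed

lemma outcome_is_bloc:
  assumes "n = 2 * p" "is_bloc n p m x B"
  shows "outcome n p m = deg x"
proof (cases x)
  case Alt_a
  then show ?thesis
    using assms(2) unfolding outcome_def by auto
next
  case Alt_b
  then have "\<not> is_bloc n p m Alt_a A" for A
    using blocs_same_option [OF assms(1) _ assms(2)] by blast
  then show ?thesis
    using assms(2) Alt_b unfolding outcome_def by auto
qed

lemma outcome_no_bloc:
  assumes "\<forall>B. \<not> is_bloc n p m x B" "\<forall>B. \<not> is_bloc n p m (other x) B"
  shows "outcome n p m = eta_lot n p m"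
  using assms unfolding outcome_def by (cases x) auto

text \<open>The defector is nominated, so it brings positive weight to \<open>other x\<close>, and every bloc
  for \<open>x\<close> contains it.\<close>
lemma outcome_pos_after_defection_from_least_bloc:
  assumes valid: "valid_profile n p m" and "n = 2 * p" "p \<ge> 1"
    and K: "is_bloc n p m x K" and least: "\<And>A. is_bloc n p m x A \<Longrightarrow> K \<subseteq> A" and "i \<in> K"
  shows "outcome n p (m(i := (other x, snd (m i)))) (other x) > 0"
    (is "outcome n p ?m' (other x) > 0")
proof (cases "\<exists>A. is_bloc n p ?m' (other x) A")
  case True
  then show ?thesis
    using outcome_is_bloc [OF \<open>n = 2 * p\<close>] by (auto simp: deg_def)
next
  case False
  have "\<not> is_bloc n p ?m' x A" for A
  proof
    assume A: "is_bloc n p ?m' x A"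
    then have "i \<notin> A"
      unfolding is_bloc_def by auto
    with A least \<open>i \<in> K\<close> show False
      using is_bloc_fun_upd by blast
  qed
  with False have "outcome n p ?m' = eta_lot n p ?m'"
    by (intro outcome_no_bloc [of n p ?m' x]) auto
  moreover obtain j where "j \<in> {1..n}" "j \<noteq> i" "i \<in> snd (m j)"
    using least_bloc_member_nominated [OF valid \<open>p \<ge> 1\<close> K least \<open>i \<in> K\<close>] by blast
  then have "eta_agent n p m i > 0"
    using assms(2,3) by (intro eta_agent_pos) simp_all
  moreover have "i \<in> {1..n}" "fst (m i) = x"
    using K \<open>i \<in> K\<close> unfolding is_bloc_def by auto
  then have "eta_lot n p ?m' (other x) = eta_lot n p m (other x) + eta_agent n p m i"
    by (intro eta_lot_switch_vote) simp_all
  ultimately show ?thesis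
    using eta_lot_nonneg [of n p m "other x"] by simp
qed

lemma outcome_le_1:
  assumes "valid_profile n p m" "n = 2 * p" "p > 0"
  shows "outcome n p m x \<le> 1"
  using eta_lot_le_1 [OF assms(1)] assms(2,3) unfolding outcome_def deg_def by auto

section \<open>Preferences and Nash equilibria\<close>

definition favorite :: "(alt \<Rightarrow> alt \<Rightarrow> bool) \<Rightarrow> alt" where
  "favorite P = (if P Alt_a Alt_b then Alt_a else Alt_b)"

definition supporters :: "nat \<Rightarrow> (nat \<Rightarrow> alt \<Rightarrow> alt \<Rightarrow> bool) \<Rightarrow> alt \<Rightarrow> nat set" where
  "supporters n R x = {i\<in>{1..n}. favorite (R i) = x}"

lemma favorite_eq_iff:
  assumes "strict_pref P"
  shows "favorite P = x \<longleftrightarrow> P x (other x)"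
proof (cases x)
  case Alt_a
  then show ?thesis
    by (simp add: favorite_def)
next
  case Alt_b
  have "P Alt_b Alt_a \<longleftrightarrow> \<not> P Alt_a Alt_b"
    using assms unfolding strict_pref_def by blast
  then show ?thesis
    using Alt_b by (simp add: favorite_def)
qed

lemma strict_pref_top_iff:
  assumes "strict_pref P"
  shows "(\<forall>y. P x y) \<longleftrightarrow> favorite P = x"
proof -
  have "P x x"
    using assms unfolding strict_pref_def by blast
  then have "(\<forall>y. P x y) \<longleftrightarrow> P x (other x)"
    by (metis alt.exhaust other.simps)
  then show ?thesis
    using favorite_eq_iff [OF assms] by simp
qed

lemma card_supporters_add_other: "card (supporters n R x) + card (supporters n R (other x)) = n"
  unfolding supporters_def using card_fibers_other [of "{1..n}" "\<lambda>i. favorite (R i)"] by simp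

lemma nash_eq_valid_profile: "nash_eq n p R m \<Longrightarrow> valid_profile n p m"
  unfolding nash_eq_def valid_profile_def by blast

locale bloc_mechanism =
  fixes n p :: nat and R :: "nat \<Rightarrow> alt \<Rightarrow> alt \<Rightarrow> bool"
  assumes n_eq: "n = 2 * p" and p_pos: "p \<ge> 1"
    and strict: "\<forall>i\<in>{1..n}. strict_pref (R i)"
begin

lemma top_iff_supporter:
  assumes "i \<in> {1..n}"
  shows "(\<forall>y. R i x y) \<longleftrightarrow> i \<in> supporters n R x"
proof -
  have "strict_pref (R i)"
    using strict assms by blast
  then have "(\<forall>y. R i x y) \<longleftrightarrow> favorite (R i) = x"
    by (rule strict_pref_top_iff)
  with assms show ?thesis
    unfolding supporters_def by blast
qed

lemma maj_eq_supporters: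
  "maj n p R = (if p + 1 \<le> card (supporters n R Alt_a) then {Alt_a}
                else if p + 1 \<le> card (supporters n R Alt_b) then {Alt_b}
                else {Alt_a, Alt_b})"
proof -
  have "{i\<in>{1..n}. R i Alt_a Alt_b} = supporters n R Alt_a"
    unfolding supporters_def favorite_def by auto
  moreover have "R i Alt_b Alt_a \<longleftrightarrow> favorite (R i) = Alt_b" if "i \<in> {1..n}" for i
    using favorite_eq_iff [of "R i" Alt_b] strict that by simp
  then have "{i\<in>{1..n}. R i Alt_b Alt_a} = supporters n R Alt_b"
    unfolding supporters_def by blast
  ultimately show ?thesis
    unfolding maj_def by simp
qed

lemma card_supporters_majority:
  assumes "maj n p R = {x}"
  shows "p + 1 \<le> card (supporters n R x)"
  using assms unfolding maj_eq_supporters by (cases x) (simp_all split: if_splits)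

lemma card_supporters_tie:
  assumes "maj n p R = {Alt_a, Alt_b}"
  shows "card (supporters n R x) = p"
proof -
  have "card (supporters n R Alt_a) \<le> p" "card (supporters n R Alt_b) \<le> p"
    using assms unfolding maj_eq_supporters by (simp_all split: if_splits)
  then show ?thesis
    using card_supporters_add_other [of n R Alt_a] n_eq by (cases x) simp_all
qed

lemma nash_eq_no_gain:
  assumes "nash_eq n p R m" "i \<in> supporters n R x" "valid_msg n p i d"
  shows "outcome n p (m(i := d)) x \<le> outcome n p m x"
proof -
  have "i \<in> {1..n}"
    using assms(2) unfolding supporters_def by simp
  then have "(\<forall>y. R i x y)" "\<not> sd_strict R i (outcome n p (m(i := d))) (outcome n p m)"
    using assms top_iff_supporter unfolding nash_eq_def by blast+
  then show ?thesis
    unfolding sd_strict_def by force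
qed

lemma nash_eqI:
  assumes "valid_profile n p m"
    and no_gain: "\<And>i x d. i \<in> supporters n R x \<Longrightarrow> valid_msg n p i d \<Longrightarrow>
                     outcome n p (m(i := d)) x \<le> outcome n p m x"
  shows "nash_eq n p R m"
  unfolding nash_eq_def
proof (intro conjI ballI allI impI notI)
  show "valid_msg n p i (m i)" if "i \<in> {1..n}" for i
    using assms(1) that unfolding valid_profile_def by blast
  fix i d
  assume "i \<in> {1..n}" "valid_msg n p i d" "sd_strict R i (outcome n p (m(i := d))) (outcome n p m)"
  then show False
    using no_gain top_iff_supporter unfolding sd_strict_def by (meson not_le)
qed

lemma nash_eq_no_bloc_against_supported:
  assumes nash: "nash_eq n p R m" and supported: "p \<le> card (supporters n R (other x))"
  shows "\<not> is_bloc n p m x B"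
proof
  assume "is_bloc n p m x B"
  have valid: "valid_profile n p m"
    using nash by (rule nash_eq_valid_profile)
  obtain K where K: "is_bloc n p m x K" and least: "\<And>A. is_bloc n p m x A \<Longrightarrow> K \<subseteq> A"
    using ex_least_bloc [OF valid n_eq \<open>is_bloc n p m x B\<close>] by blast
  have "K \<inter> supporters n R (other x) \<noteq> {}"
    using K supported n_eq unfolding is_bloc_def supporters_def
    by (intro Int_nonempty_if_card_sum_gt [of "{1..n}"]) auto
  then obtain i where i: "i \<in> K" "i \<in> supporters n R (other x)"
    by blast
  have "i \<in> {1..n}"
    using i(2) unfolding supporters_def by simp
  then have "valid_msg n p i (other x, snd (m i))"
    using valid_profileD [OF valid] unfolding valid_msg_def by simp
  moreover have "outcome n p (m(i := (other x, snd (m i)))) (other x) > 0"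
    using outcome_pos_after_defection_from_least_bloc [OF valid n_eq p_pos K least i(1)] .
  moreover have "outcome n p m (other x) = 0"
    using outcome_is_bloc [OF n_eq K] by (simp add: deg_def)
  ultimately show False
    using nash_eq_no_gain [OF nash i(2)] by fastforce
qed

end

section \<open>Equilibria without blocs\<close>

locale no_bloc_equilibrium = bloc_mechanism +
  fixes m :: "nat \<Rightarrow> msg"
  assumes nash: "nash_eq n p R m" and no_bloc: "\<forall>x B. \<not> is_bloc n p m x B"
begin

lemma valid: "valid_profile n p m"
  using nash by (rule nash_eq_valid_profile)

lemma supporter_cannot_raise_eta_lot:
  assumes "i \<in> supporters n R x" "valid_msg n p i d" "fst d = x"
  shows "eta_lot n p (m(i := d)) x \<le> eta_lot n p m x"
proof -
  have "outcome n p m = eta_lot n p m"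
    using no_bloc by (intro outcome_no_bloc [of n p m x]) auto
  then have gain: "outcome n p (m(i := d)) x \<le> eta_lot n p m x"
    using nash_eq_no_gain [OF nash assms(1,2)] by simp
  have no_bloc_other: "\<forall>B. \<not> is_bloc n p (m(i := d)) (other x) B"
  proof (intro allI notI)
    fix B
    assume B: "is_bloc n p (m(i := d)) (other x) B"
    then have "i \<notin> B"
      using assms(3) unfolding is_bloc_def by auto
    with B no_bloc show False
      using is_bloc_fun_upd by blast
  qed
  show ?thesis
  proof (cases "\<exists>B. is_bloc n p (m(i := d)) x B")
    case True
    then have "1 \<le> eta_lot n p m x"
      using gain outcome_is_bloc [OF n_eq] by (auto simp: deg_def)
    moreover have "eta_lot n p (m(i := d)) x \<le> 1"
      using eta_lot_le_1 [OF valid_profile_fun_upd [OF valid assms(2)]] n_eq p_pos by simp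
    ultimately show ?thesis
      by linarith
  next
    case False
    then show ?thesis
      using gain outcome_no_bloc [of n p "m(i := d)" x] no_bloc_other by auto
  qed
qed

text \<open>An agent who is nominated but votes against its favorite could switch its vote and add
  its (positive) weight to its favorite.\<close>
lemma nominee_votes_favorite:
  assumes "j \<in> {1..n}" "k \<in> snd (m j)"
  shows "fst (m k) = favorite (R k)"
proof (rule ccontr)
  assume insincere: "fst (m k) \<noteq> favorite (R k)"
  define d where "d = (favorite (R k), snd (m k))"
  have "j \<noteq> k" and kN: "k \<in> {1..n}"
    using valid_profileD [OF valid assms(1)] assms(2) by auto
  then have "valid_msg n p k d" "k \<in> supporters n R (favorite (R k))"
    using valid_profileD [OF valid kN] unfolding d_def valid_msg_def supporters_def by simp_all
  moreover have "eta_agent n p m k > 0"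
    using n_eq p_pos assms \<open>j \<noteq> k\<close> by (intro eta_agent_pos) simp_all
  moreover have "eta_lot n p (m(k := d)) (favorite (R k)) = eta_lot n p m (favorite (R k)) + eta_agent n p m k"
    using insincere by (intro eta_lot_switch_vote [OF kN]) (simp_all add: d_def)
  ultimately show False
    using supporter_cannot_raise_eta_lot [of k "favorite (R k)" d] by (simp add: d_def)
qed

text \<open>Otherwise the supporter could replace a nominee who does not vote \<open>x\<close> by a voter for \<open>x\<close>
  it does not nominate, adding one nomination to \<open>x\<close>.\<close>
lemma sincere_nominates_voters_or_all_covoters:
  assumes supporter: "i \<in> supporters n R x" and vote: "fst (m i) = x"
  shows "snd (m i) \<subseteq> voters n m x \<or> voters n m x - {i} \<subseteq> snd (m i)"
proof (rule ccontr)
  assume "\<not> ?thesis"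
  then obtain y z where y: "y \<in> snd (m i)" "y \<notin> voters n m x"
    and z: "z \<in> voters n m x" "z \<noteq> i" "z \<notin> snd (m i)"
    by blast
  have iN: "i \<in> {1..n}"
    using supporter unfolding supporters_def by simp
  have nominees: "snd (m i) \<subseteq> {1..n} - {i}" "card (snd (m i)) = p" "finite (snd (m i))"
    using valid_profileD [OF valid iN] by (auto intro: finite_subset)
  define d where "d = (x, insert z (snd (m i) - {y}))"
  have "valid_msg n p i d"
    using nominees y z p_pos unfolding d_def valid_msg_def voters_def by (auto simp: card_Diff_singleton)
  have "snd d \<inter> voters n m x = insert z (snd (m i) \<inter> voters n m x)"
    using y z unfolding d_def by auto
  then have "card (snd d \<inter> voters n m x) = card (snd (m i) \<inter> voters n m x) + 1"
    using nominees(3) z(3) by simp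
  then have "nominations n (m(i := d)) x = nominations n m x + 1"
    using nominations_fun_upd_nominees [OF iN, of d m x] vote by (simp add: d_def)
  then have "eta_lot n p (m(i := d)) x > eta_lot n p m x"
    using eta_lot_eq_nominations [OF valid_profile_fun_upd [OF valid \<open>valid_msg n p i d\<close>]]
      eta_lot_eq_nominations [OF valid] n_eq p_pos by (simp add: divide_strict_right_mono)
  then show False
    using supporter_cannot_raise_eta_lot [OF supporter \<open>valid_msg n p i d\<close>] by (simp add: d_def)
qed

lemma nominees_vote_other_if_no_sincere_voter:
  assumes "voters n m x \<inter> supporters n R x = {}" "j \<in> {1..n}"
  shows "snd (m j) \<subseteq> voters n m (other x)"
proof
  fix k
  assume "k \<in> snd (m j)"
  then have "k \<in> {1..n}" "fst (m k) = favorite (R k)"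
    using valid_profileD [OF valid assms(2)] nominee_votes_favorite [OF assms(2)] by auto
  with assms(1) show "k \<in> voters n m (other x)"
    unfolding voters_def supporters_def using neq_iff_other by auto
qed

lemma sincere_voters_nominate_sincere_voters:
  assumes many: "p + 1 \<le> card (voters n m x)" and i: "i \<in> voters n m x \<inter> supporters n R x"
  shows "snd (m i) \<subseteq> voters n m x \<inter> supporters n R x"
proof -
  have iN: "i \<in> {1..n}" and supporter: "i \<in> supporters n R x" and vote: "fst (m i) = x"
    using i unfolding voters_def by auto
  have nominees: "card (snd (m i)) = p" "finite (snd (m i))"
    using valid_profileD [OF valid iN] by (auto intro: finite_subset)
  have "snd (m i) \<subseteq> voters n m x"
  proof (cases "voters n m x - {i} \<subseteq> snd (m i)")
    case True
    moreover have "card (snd (m i)) \<le> card (voters n m x - {i})"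
      using many nominees(1) i by (simp add: card_Diff_singleton)
    ultimately have "voters n m x - {i} = snd (m i)"
      using nominees(2) by (intro card_seteq)
    then show ?thesis
      by blast
  next
    case False
    then show ?thesis
      using sincere_nominates_voters_or_all_covoters [OF supporter vote] by blast
  qed
  then show ?thesis
    using nominee_votes_favorite [OF iN] unfolding voters_def supporters_def by auto
qed

text \<open>Otherwise the sincere voters for \<open>x\<close> would form a bloc, or there are none and the nominees
  of agent \<open>1\<close> all vote against \<open>x\<close>, of whom there are too few.\<close>
lemma card_voters_le: "card (voters n m x) \<le> p"
proof (rule ccontr)
  assume "\<not> ?thesis"
  then have many: "p + 1 \<le> card (voters n m x)"
    by simp
  show False
  proof (cases "voters n m x \<inter> supporters n R x = {}")
    case False
    then obtain i where "i \<in> voters n m x \<inter> supporters n R x"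
      by blast
    then have "is_bloc n p m x (voters n m x \<inter> supporters n R x)"
      using sincere_voters_nominate_sincere_voters [OF many] unfolding voters_def
      by (intro is_blocI [OF valid]) auto
    then show False
      using no_bloc by blast
  next
    case True
    have "1 \<in> {1..n}"
      using n_eq p_pos by simp
    then have "card (snd (m 1)) \<le> card (voters n m (other x))"
      using nominees_vote_other_if_no_sincere_voter [OF True] by (intro card_mono) simp_all
    moreover have "card (snd (m 1)) = p"
      using valid_profileD [OF valid \<open>1 \<in> {1..n}\<close>] by simp
    ultimately show False
      using many card_voters_add_other [of n m x] n_eq by simp
  qed
qed

lemma card_voters: "card (voters n m x) = p"
  using card_voters_le [of x] card_voters_le [of "other x"] card_voters_add_other [of n m x] n_eq
  by simp

lemma not_nominees_subset_voters:
  assumes "i \<in> voters n m x"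
  shows "\<not> snd (m i) \<subseteq> voters n m x"
proof
  assume "snd (m i) \<subseteq> voters n m x"
  moreover have "i \<in> {1..n}"
    using assms unfolding voters_def by simp
  ultimately have "snd (m i) \<subseteq> voters n m x - {i}" "card (snd (m i)) = p"
    using valid_profileD [OF valid] by auto
  then have "p \<le> card (voters n m x - {i})"
    by (metis card_mono finite_Diff finite_voters)
  then show False
    using assms card_voters [of x] p_pos by simp
qed

lemma sincere_voter_nominates_covoters:
  assumes "i \<in> voters n m x" "i \<in> supporters n R x"
  shows "voters n m x - {i} \<subseteq> snd (m i)"
  using sincere_nominates_voters_or_all_covoters [OF assms(2)] not_nominees_subset_voters [OF assms(1)]
    assms(1) unfolding voters_def by blast

lemma ex_sincere_voter: "\<exists>i\<in>voters n m x. i \<in> supporters n R x"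
proof (rule ccontr)
  assume "\<not> ?thesis"
  then have none: "voters n m x \<inter> supporters n R x = {}"
    by blast
  have "voters n m (other x) \<noteq> {}"
    using card_voters [of "other x"] p_pos by auto
  then obtain j where j: "j \<in> voters n m (other x)"
    by blast
  then have "j \<in> {1..n}"
    unfolding voters_def by simp
  then show False
    using nominees_vote_other_if_no_sincere_voter [OF none] not_nominees_subset_voters [OF j] by blast
qed

lemma voters_subset_supporters: "voters n m x \<subseteq> supporters n R x"
proof
  fix k
  assume k: "k \<in> voters n m x"
  obtain i where i: "i \<in> voters n m x" "i \<in> supporters n R x"
    using ex_sincere_voter by blast
  show "k \<in> supporters n R x"
  proof (cases "k = i")
    case False
    then have "k \<in> snd (m i)"
      using sincere_voter_nominates_covoters [OF i] k by blast
    moreover have "i \<in> {1..n}"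
      using i(1) unfolding voters_def by simp
    ultimately show ?thesis
      using nominee_votes_favorite k unfolding voters_def supporters_def by auto
  qed (use i in simp)
qed

lemma voters_eq_supporters: "voters n m x = supporters n R x"
proof
  show "supporters n R x \<subseteq> voters n m x"
  proof
    fix k
    assume k: "k \<in> supporters n R x"
    show "k \<in> voters n m x"
    proof (rule ccontr)
      assume "k \<notin> voters n m x"
      then have "k \<in> voters n m (other x)"
        using k voters_Un_other [of n m x] unfolding supporters_def by blast
      then have "k \<in> supporters n R (other x)"
        using voters_subset_supporters by blast
      with k show False
        unfolding supporters_def by simp
    qed
  qed
qed (rule voters_subset_supporters)

lemma card_supporters: "card (supporters n R x) = p"
  using card_voters voters_eq_supporters by simp

lemma outcome_eq_half: "outcome n p m = (\<lambda>_. 1 / 2)"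
proof -
  have "outcome n p m = eta_lot n p m"
    using no_bloc by (intro outcome_no_bloc [of n p m Alt_a]) auto
  moreover have "eta_lot n p m x = 1 / 2" for x
  proof (rule eta_lot_half [OF valid n_eq p_pos card_voters])
    fix z i
    assume "i \<in> voters n m z"
    then show "voters n m z - {i} \<subseteq> snd (m i)"
      using voters_eq_supporters [of z] by (intro sincere_voter_nominates_covoters) auto
  qed
  ultimately show ?thesis
    by auto
qed

end

section \<open>Equilibrium outcomes\<close>

definition tie_profile :: "nat \<Rightarrow> (nat \<Rightarrow> alt \<Rightarrow> alt \<Rightarrow> bool) \<Rightarrow> (alt \<Rightarrow> nat) \<Rightarrow> nat \<Rightarrow> msg" where
  "tie_profile n R g j =
     (favorite (R j), insert (g (other (favorite (R j)))) (supporters n R (favorite (R j)) - {j}))"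

lemma voters_tie_profile: "voters n (tie_profile n R g) z = supporters n R z"
  unfolding voters_def supporters_def tie_profile_def by simp

lemma tie_profile_nominates_covoters:
  "i \<in> voters n (tie_profile n R g) z \<Longrightarrow> voters n (tie_profile n R g) z - {i} \<subseteq> snd (tie_profile n R g i)"
  unfolding voters_tie_profile unfolding tie_profile_def supporters_def by auto

context bloc_mechanism
begin

lemma no_bloc_equilibriumI:
  "nash_eq n p R m \<Longrightarrow> \<forall>x B. \<not> is_bloc n p m x B \<Longrightarrow> no_bloc_equilibrium n p R m"
  by (intro no_bloc_equilibrium.intro no_bloc_equilibrium_axioms.intro bloc_mechanism_axioms)

lemma nash_eq_outcome_majority:
  assumes nash: "nash_eq n p R m" and majority: "p + 1 \<le> card (supporters n R x)"
  shows "outcome n p m = deg x"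
proof -
  have no_bloc_other: "\<not> is_bloc n p m (other x) B" for B
    using nash_eq_no_bloc_against_supported [OF nash] majority by simp
  have "\<exists>B. is_bloc n p m x B"
  proof (rule ccontr)
    assume "\<not> ?thesis"
    with no_bloc_other have "\<forall>z B. \<not> is_bloc n p m z B"
      using alt_cases_other [of "\<lambda>z. \<forall>B. \<not> is_bloc n p m z B" x] by blast
    then have "card (supporters n R x) = p"
      by (rule no_bloc_equilibrium.card_supporters [OF no_bloc_equilibriumI [OF nash]])
    with majority show False
      by simp
  qed
  then show ?thesis
    using outcome_is_bloc [OF n_eq] by blast
qed

lemma nash_eq_outcome_tie:
  assumes nash: "nash_eq n p R m" and tie: "\<And>z. card (supporters n R z) = p"
  shows "outcome n p m = (\<lambda>_. 1 / 2)"
proof -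
  have "\<not> is_bloc n p m z B" for z B
    using nash_eq_no_bloc_against_supported [OF nash] tie by simp
  then show ?thesis
    by (simp add: no_bloc_equilibrium.outcome_eq_half [OF no_bloc_equilibriumI [OF nash]])
qed

text \<open>No outsider can break the bloc, and its members already obtain their favorite for sure.\<close>
lemma nash_eq_if_supporters_bloc:
  assumes valid: "valid_profile n p m" and bloc: "is_bloc n p m x (supporters n R x)"
  shows "nash_eq n p R m"
proof (rule nash_eqI [OF valid])
  fix i z d
  assume i: "i \<in> supporters n R z" "valid_msg n p i d"
  show "outcome n p (m(i := d)) z \<le> outcome n p m z"
  proof (cases "i \<in> supporters n R x")
    case True
    with i(1) have "z = x"
      unfolding supporters_def by simp
    then show ?thesis
      using outcome_le_1 [OF valid_profile_fun_upd [OF valid i(2)] n_eq] p_pos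
        outcome_is_bloc [OF n_eq bloc] by (simp add: deg_def)
  next
    case False
    then have "is_bloc n p (m(i := d)) x (supporters n R x)"
      using bloc is_bloc_fun_upd by blast
    then show ?thesis
      using outcome_is_bloc [OF n_eq] bloc by simp
  qed
qed

lemma ex_supporters_bloc:
  assumes majority: "p + 1 \<le> card (supporters n R x)"
  shows "\<exists>m. valid_profile n p m \<and> is_bloc n p m x (supporters n R x)"
proof -
  let ?S = "supporters n R x"
  have S_sub: "?S \<subseteq> {1..n}"
    unfolding supporters_def by auto
  have "\<exists>c. valid_msg n p j (x, c) \<and> (j \<in> ?S \<longrightarrow> c \<subseteq> ?S)" for j
  proof (cases "j \<in> ?S")
    case True
    then have "p \<le> card (?S - {j})"
      using majority by (simp add: card_Diff_singleton)
    then show ?thesis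
      using ex_valid_nominees_within [OF S_sub] by blast
  next
    case False
    have "p \<le> card ({1..n} - {j})"
      using n_eq p_pos by (cases "j \<in> {1..n}") (simp_all add: card_Diff_singleton_if)
    then show ?thesis
      using ex_valid_nominees_within [OF subset_refl] False by blast
  qed
  then have "\<exists>c. \<forall>j. valid_msg n p j (x, c j) \<and> (j \<in> ?S \<longrightarrow> c j \<subseteq> ?S)"
    by (intro choice allI)
  then obtain c where c: "\<And>j. valid_msg n p j (x, c j)" "\<And>j. j \<in> ?S \<Longrightarrow> c j \<subseteq> ?S"
    by blast
  have "valid_profile n p (\<lambda>j. (x, c j))"
    using c(1) unfolding valid_profile_def by blast
  moreover have "is_bloc n p (\<lambda>j. (x, c j)) x ?S"
    using S_sub majority c(2) unfolding is_bloc_def by simp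
  ultimately show ?thesis
    by blast
qed

lemma ex_nash_eq_majority:
  assumes "p + 1 \<le> card (supporters n R x)"
  shows "\<exists>m. nash_eq n p R m \<and> outcome n p m = deg x"
  using ex_supporters_bloc [OF assms] nash_eq_if_supporters_bloc outcome_is_bloc [OF n_eq] by blast

lemma valid_tie_profile:
  assumes tie: "\<And>z. card (supporters n R z) = p" and g: "\<And>z. g z \<in> supporters n R z"
  shows "valid_profile n p (tie_profile n R g)"
  unfolding valid_profile_def valid_msg_def
proof (intro ballI conjI)
  fix j
  assume j: "j \<in> {1..n}"
  let ?y = "favorite (R j)"
  have g_other: "g (other ?y) \<in> {1..n}" "g (other ?y) \<notin> supporters n R ?y"
    using g [of "other ?y"] unfolding supporters_def by auto
  have "j \<in> supporters n R ?y"
    using j unfolding supporters_def by simp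
  then have "g (other ?y) \<noteq> j"
    using g_other by metis
  then show "snd (tie_profile n R g j) \<subseteq> {1..n} - {j}"
    using g_other unfolding tie_profile_def supporters_def by auto
  show "card (snd (tie_profile n R g j)) = p"
    using g_other \<open>j \<in> supporters n R ?y\<close> tie [of ?y] p_pos
    by (simp add: tie_profile_def card_Diff_singleton supporters_def)
qed

lemma eta_lot_tie_profile:
  assumes tie: "\<And>z. card (supporters n R z) = p" and g: "\<And>z. g z \<in> supporters n R z"
  shows "eta_lot n p (tie_profile n R g) z = 1 / 2"
  using tie voters_tie_profile
  by (intro eta_lot_half [OF valid_tie_profile [OF tie g] n_eq p_pos _ tie_profile_nominates_covoters])
    simp

lemma outcome_tie_profile:
  assumes tie: "\<And>z. card (supporters n R z) = p" and g: "\<And>z. g z \<in> supporters n R z"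
  shows "outcome n p (tie_profile n R g) = (\<lambda>_. 1 / 2)"
proof -
  have "outcome n p (tie_profile n R g) = eta_lot n p (tie_profile n R g)"
    using not_is_bloc_if_card_voters_le tie voters_tie_profile
    by (intro outcome_no_bloc [of n p _ Alt_a]) auto
  then show ?thesis
    using eta_lot_tie_profile [OF tie g] by auto
qed

text \<open>Each option has only \<open>p\<close> voters, and every deviator already nominates all its co-voters,
  so a deviation neither creates a bloc nor raises the nominations of the deviator's favorite.\<close>
lemma nash_eq_tie_profile:
  assumes tie: "\<And>z. card (supporters n R z) = p" and g: "\<And>z. g z \<in> supporters n R z"
  shows "nash_eq n p R (tie_profile n R g)"
proof (rule nash_eqI [OF valid_tie_profile [OF tie g]])
  let ?m = "tie_profile n R g"
  fix i z d
  assume i: "i \<in> supporters n R z" "valid_msg n p i d"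
  have valid': "valid_profile n p (?m(i := d))"
    using valid_profile_fun_upd [OF valid_tie_profile [OF tie g] i(2)] .
  have iV: "i \<in> voters n ?m z"
    using i(1) voters_tie_profile by simp
  have "outcome n p (?m(i := d)) z \<le> 1 / 2"
  proof (cases "\<exists>B. is_bloc n p (?m(i := d)) (other z) B")
    case True
    then show ?thesis
      using outcome_is_bloc [OF n_eq] by (auto simp: deg_def)
  next
    case False
    have "card (voters n (?m(i := d)) z) \<le> card (voters n ?m z)"
      using voters_fun_upd_subset [OF iV] by (intro card_mono) simp_all
    then have "outcome n p (?m(i := d)) = eta_lot n p (?m(i := d))"
      using False not_is_bloc_if_card_voters_le tie voters_tie_profile
      by (intro outcome_no_bloc) auto
    moreover have "nominations n (?m(i := d)) z \<le> nominations n ?m z"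
      using nominations_fun_upd_le [OF valid_tie_profile [OF tie g] iV
          tie_profile_nominates_covoters [OF iV] i(2)] .
    then have "eta_lot n p (?m(i := d)) z \<le> eta_lot n p ?m z"
      using eta_lot_eq_nominations [OF valid'] eta_lot_eq_nominations [OF valid_tie_profile [OF tie g]]
      by (simp add: divide_right_mono)
    ultimately show ?thesis
      using eta_lot_tie_profile [OF tie g] by simp
  qed
  then show "outcome n p (?m(i := d)) z \<le> outcome n p ?m z"
    using outcome_tie_profile [OF tie g] by simp
qed

lemma ex_nash_eq_tie:
  assumes tie: "\<And>z. card (supporters n R z) = p"
  shows "\<exists>m. nash_eq n p R m \<and> outcome n p m = (\<lambda>_. 1 / 2)"
proof -
  have "\<forall>z. \<exists>i. i \<in> supporters n R z"
    using tie p_pos by (metis card.empty ex_in_conv not_one_le_zero)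
  then have "\<exists>g. \<forall>z. g z \<in> supporters n R z"
    by (rule choice)
  then show ?thesis
    using nash_eq_tie_profile [OF tie] outcome_tie_profile [OF tie] by blast
qed

lemma NE_outcomes_majority:
  assumes "p + 1 \<le> card (supporters n R x)"
  shows "NE_outcomes n p R = {deg x}"
proof -
  obtain m where "nash_eq n p R m" "outcome n p m = deg x"
    using ex_nash_eq_majority [OF assms] by blast
  then have "deg x \<in> NE_outcomes n p R"
    unfolding NE_outcomes_def by force
  moreover have "NE_outcomes n p R \<subseteq> {deg x}"
    unfolding NE_outcomes_def using nash_eq_outcome_majority [OF _ assms] by auto
  ultimately show ?thesis
    by blast
qed

lemma NE_outcomes_tie:
  assumes "\<And>z. card (supporters n R z) = p"
  shows "NE_outcomes n p R = {(\<lambda>_. 1 / 2)}"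
proof -
  obtain m where "nash_eq n p R m" "outcome n p m = (\<lambda>_. 1 / 2)"
    using ex_nash_eq_tie [OF assms] by blast
  then have "(\<lambda>_. 1 / 2) \<in> NE_outcomes n p R"
    unfolding NE_outcomes_def by force
  moreover have "NE_outcomes n p R \<subseteq> {(\<lambda>_. 1 / 2)}"
    unfolding NE_outcomes_def using nash_eq_outcome_tie [OF _ assms] by auto
  ultimately show ?thesis
    by blast
qed

end

theorem lemma3:
  fixes n p :: nat and R :: "nat \<Rightarrow> alt \<Rightarrow> alt \<Rightarrow> bool"
  assumes "n = 2 * p" and "p \<ge> 1"
    and "\<forall>i\<in>{1..n}. strict_pref (R i)"
  shows "(\<forall>x. maj n p R = {x} \<longrightarrow> NE_outcomes n p R = {deg x})
       \<and> (maj n p R = {Alt_a, Alt_b} \<longrightarrow> NE_outcomes n p R = {(\<lambda>_. 1 / 2)})"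
proof -
  interpret bloc_mechanism n p R
    using assms by unfold_locales
  show ?thesis
    using NE_outcomes_majority card_supporters_majority NE_outcomes_tie card_supporters_tie by blast
qed

end
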